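(* Let $G$ be a finite simple graph that is $\mathcal{MC}$-edge connected and satisfies $\mathrm{ann}\,G=0$, and let $\mathcal{N}G$ be its normal graph algebra over a field $\mathbb{F}$ of characteristic not $2$. If $g$ is an edge-scaling automorphism of $\mathcal{N}G$, then $g$ is a scalar automorphism.
   Context: For a finite simple graph $G$ with vertex set $VG$ and edge set $EG$, $\mathcal{N}G=U_G\oplus\mathfrak{Z}_G$ with $U_G$ having basis $VG$ and $\mathfrak{Z}_G$ basis $EG$ (edge with endpoints $x,y$ written $[x,y]$), commutative bilinear product determined by: for distinct vertices $x,y$, $xy=[x,y]$ if adjacent and $0$ otherwise; $x^2=\sum_{y\sim x}[x,y]$; products involving $\mathfrak{Z}_G$ are $0$. $\mathrm{ann}\,G=\{u\in U_G:uU_G=0\}$. An automorphism of $\mathcal{N}G$ is a product-preserving linear bijection $g$ of $\mathcal{N}G$ with $g(U_G)=U_G$ and $g(\mathfrak{Z}_G)=\mathfrak{Z}_G$. It is edge-scaling if $g(\mathfrak{e})\in\langle\mathfrak{e}\rangle$ for every edge $\mathfrak{e}$, and scalar if there is $\alpha\in\mathbb{F}$, $\alpha\neq0$, with $g(u)=\alpha u$ for $u\in U_G$ and $g(\mathfrak{z})=\alpha^2\mathfrak{z}$ for $\mathfrak{z}\in\mathfrak{Z}_G$. A set of distinct edges $\mathfrak{e}_1,\dots,\mathfrak{e}_n$ is coherent if there are scalars $\alpha_i$, not all $0$, such that at each vertex the sum of the $\alpha_i$ over incident $\mathfrak{e}_i$ is $0$; a graph is minimally coherent if its edge set is coherent but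 no proper subset is. $G$ is $\mathcal{MC}$-edge connected if for any two edges $\mathfrak{e},\mathfrak{f}$ there is a sequence $G_1,\dots,G_m$ of minimally coherent subgraphs of $G$ with $\mathfrak{e}\in EG_1$, $\mathfrak{f}\in EG_m$, and $EG_i\cap EG_{i+1}\neq\emptyset$ for $1\le i\le m-1$. *)

theory Defs
  imports Main
begin

definition simple_graph :: "'v set \<Rightarrow> ('v \<Rightarrow> 'v \<Rightarrow> bool) \<Rightarrow> bool" where
  "simple_graph V E \<longleftrightarrow> finite V \<and> (\<forall>x y. E x y \<longrightarrow> x \<in> V \<and> y \<in> V)
     \<and> (\<forall>x y. E x y \<longrightarrow> E y x) \<and> (\<forall>x. \<not> E x x)"

definition edges :: "'v set \<Rightarrow> ('v \<Rightarrow> 'v \<Rightarrow> bool) \<Rightarrow> 'v set set" where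
  "edges V E = {{x, y} | x y. x \<in> V \<and> y \<in> V \<and> E x y}"

text \<open>Elements of NG = U_G (+) Z_G: a pair (u, z) of coefficient functions,
u on the vertex basis, z on the edge basis.\<close>
type_synonym ('v, 'a) ngelem = "('v \<Rightarrow> 'a) \<times> ('v set \<Rightarrow> 'a)"

definition NG_carrier :: "'v set \<Rightarrow> ('v \<Rightarrow> 'v \<Rightarrow> bool) \<Rightarrow> ('v, 'a::field) ngelem set" where
  "NG_carrier V E = {(u, z). (\<forall>x. x \<notin> V \<longrightarrow> u x = 0) \<and> (\<forall>e. e \<notin> edges V E \<longrightarrow> z e = 0)}"

definition ng_zero :: "('v, 'a::field) ngelem" where
  "ng_zero = ((\<lambda>_. 0), (\<lambda>_. 0))"

definition ng_add :: "('v, 'a::field) ngelem \<Rightarrow> ('v, 'a) ngelem \<Rightarrow> ('v, 'a) ngelem" where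
  "ng_add a b = ((\<lambda>x. fst a x + fst b x), (\<lambda>e. snd a e + snd b e))"

definition ng_smul :: "'a::field \<Rightarrow> ('v, 'a) ngelem \<Rightarrow> ('v, 'a) ngelem" where
  "ng_smul c a = ((\<lambda>x. c * fst a x), (\<lambda>e. c * snd a e))"

definition U_part :: "'v set \<Rightarrow> ('v \<Rightarrow> 'v \<Rightarrow> bool) \<Rightarrow> ('v, 'a::field) ngelem set" where
  "U_part V E = {a \<in> NG_carrier V E. snd a = (\<lambda>_. 0)}"

definition Z_part :: "'v set \<Rightarrow> ('v \<Rightarrow> 'v \<Rightarrow> bool) \<Rightarrow> ('v, 'a::field) ngelem set" where
  "Z_part V E = {a \<in> NG_carrier V E. fst a = (\<lambda>_. 0)}"

text \<open>Product of basis vertices x, y (as an element of Z_G, given by its edge coefficients):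
x y = [x,y] if x ~ y (x \<noteq> y), 0 if distinct non-adjacent, x^2 = sum of [x,y] over y ~ x.\<close>
definition vert_prod :: "'v set \<Rightarrow> ('v \<Rightarrow> 'v \<Rightarrow> bool) \<Rightarrow> 'v \<Rightarrow> 'v \<Rightarrow> 'v set \<Rightarrow> 'a::field" where
  "vert_prod V E x y = (\<lambda>e.
     if x = y then (if e \<in> edges V E \<and> x \<in> e then 1 else 0)
     else if E x y \<and> e = {x, y} then 1 else 0)"

text \<open>Bilinear extension; all products involving Z_G vanish.\<close>
definition ng_mult :: "'v set \<Rightarrow> ('v \<Rightarrow> 'v \<Rightarrow> bool) \<Rightarrow> ('v, 'a::field) ngelem \<Rightarrow> ('v, 'a) ngelem \<Rightarrow> ('v, 'a) ngelem" where
  "ng_mult V E a b = ((\<lambda>_. 0),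
     (\<lambda>e. \<Sum>x\<in>V. \<Sum>y\<in>V. fst a x * fst b y * vert_prod V E x y e))"

definition ann :: "'v set \<Rightarrow> ('v \<Rightarrow> 'v \<Rightarrow> bool) \<Rightarrow> ('v, 'a::field) ngelem set" where
  "ann V E = {u \<in> U_part V E. \<forall>v \<in> U_part V E. ng_mult V E u v = ng_zero}"

definition ng_automorphism :: "'v set \<Rightarrow> ('v \<Rightarrow> 'v \<Rightarrow> bool) \<Rightarrow> (('v, 'a::field) ngelem \<Rightarrow> ('v, 'a) ngelem) \<Rightarrow> bool" where
  "ng_automorphism V E g \<longleftrightarrow>
     (\<forall>a \<in> NG_carrier V E. \<forall>b \<in> NG_carrier V E. g (ng_add a b) = ng_add (g a) (g b)) \<and>
     (\<forall>c. \<forall>a \<in> NG_carrier V E. g (ng_smul c a) = ng_smul c (g a)) \<and>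
     bij_betw g (NG_carrier V E) (NG_carrier V E) \<and>
     g ` U_part V E = U_part V E \<and> g ` Z_part V E = Z_part V E \<and>
     (\<forall>a \<in> NG_carrier V E. \<forall>b \<in> NG_carrier V E. g (ng_mult V E a b) = ng_mult V E (g a) (g b))"

definition edge_vec :: "'v set \<Rightarrow> ('v, 'a::field) ngelem" where
  "edge_vec e = ((\<lambda>_. 0), (\<lambda>f. if f = e then 1 else 0))"

definition edge_scaling :: "'v set \<Rightarrow> ('v \<Rightarrow> 'v \<Rightarrow> bool) \<Rightarrow> (('v, 'a::field) ngelem \<Rightarrow> ('v, 'a) ngelem) \<Rightarrow> bool" where
  "edge_scaling V E g \<longleftrightarrow> (\<forall>e \<in> edges V E. \<exists>c. g (edge_vec e) = ng_smul c (edge_vec e))"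

definition scalar_aut :: "'v set \<Rightarrow> ('v \<Rightarrow> 'v \<Rightarrow> bool) \<Rightarrow> (('v, 'a::field) ngelem \<Rightarrow> ('v, 'a) ngelem) \<Rightarrow> bool" where
  "scalar_aut V E g \<longleftrightarrow> (\<exists>\<alpha>. \<alpha> \<noteq> 0 \<and> (\<forall>a \<in> U_part V E. g a = ng_smul \<alpha> a)
                                \<and> (\<forall>a \<in> Z_part V E. g a = ng_smul (\<alpha>^2) a))"

definition coherent :: "'a::field itself \<Rightarrow> 'v set set \<Rightarrow> bool" where
  "coherent T S \<longleftrightarrow> (\<exists>\<alpha> :: 'v set \<Rightarrow> 'a. (\<exists>e \<in> S. \<alpha> e \<noteq> 0) \<and>
       (\<forall>v. (\<Sum>e \<in> {e \<in> S. v \<in> e}. \<alpha> e) = 0))"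

definition minimally_coherent :: "'a::field itself \<Rightarrow> 'v set set \<Rightarrow> bool" where
  "minimally_coherent T S \<longleftrightarrow> coherent T S \<and> (\<forall>S'. S' \<subset> S \<longrightarrow> \<not> coherent T S')"

text \<open>Subgraphs are identified by their edge sets (isolated vertices do not affect
coherence or the chaining condition).\<close>
definition MC_edge_connected :: "'a::field itself \<Rightarrow> 'v set \<Rightarrow> ('v \<Rightarrow> 'v \<Rightarrow> bool) \<Rightarrow> bool" where
  "MC_edge_connected T V E \<longleftrightarrow> (\<forall>e \<in> edges V E. \<forall>f \<in> edges V E. \<exists>Gs :: 'v set set list.
      Gs \<noteq> [] \<and> (\<forall>H \<in> set Gs. H \<subseteq> edges V E \<and> minimally_coherent T H) \<and>
      e \<in> hd Gs \<and> f \<in> last Gs \<and>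
      (\<forall>i. Suc i < length Gs \<longrightarrow> Gs ! i \<inter> Gs ! Suc i \<noteq> {}))"

end

theory Submission
  imports Defs
begin

text \<open>For an edge \<open>e = {x, y}\<close> the \<open>[x,y]\<close>-coefficient of a product \<open>u v\<close> of elements of
  \<open>U\<^sub>G\<close> is \<open>\<phi>\<^sub>e(u) \<phi>\<^sub>e(v)\<close>, where \<open>\<phi>\<^sub>e(u) = u\<^sub>x + u\<^sub>y\<close>. If \<open>g\<close> scales \<open>[x,y]\<close> by \<open>c\<^sub>e\<close>,
  then \<open>c\<^sub>e \<phi>\<^sub>e(u) \<phi>\<^sub>e(v) = \<phi>\<^sub>e(g u) \<phi>\<^sub>e(g v)\<close>, and taking \<open>v = x\<close> gives
  \<open>\<phi>\<^sub>e \<circ> g = s\<^sub>e \<phi>\<^sub>e\<close> with \<open>s\<^sub>e\<^sup>2 = c\<^sub>e\<close>. A weighting \<open>\<beta>\<close> of the edges that sums to zero at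
  every vertex kills \<open>\<Sum>\<^sub>e \<beta>\<^sub>e \<phi>\<^sub>e\<close>; applying this to \<open>g\<close> of a vertex shows that \<open>\<beta> s\<close> is
  again such a weighting. On a minimally coherent edge set these weightings form a line
  of nowhere-vanishing vectors, so \<open>s\<close> is constant there, and MC-edge connectivity
  makes it a global constant \<open>\<alpha>\<close>. Then \<open>g u - \<alpha> u\<close> has all \<open>\<phi>\<^sub>e\<close> zero, so it lies in
  \<open>ann G = 0\<close>, and \<open>c\<^sub>e = \<alpha>\<^sup>2\<close> on every edge.\<close>

lemma simple_graph_edgeE:
  assumes "simple_graph V E" "e \<in> edges V E"
  obtains x y where "e = {x, y}" "x \<noteq> y" "E x y" "E y x" "x \<in> V" "y \<in> V"
  using assms unfolding simple_graph_def edges_def by blast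

lemma simple_graph_edge_subset:
  "simple_graph V E \<Longrightarrow> e \<in> edges V E \<Longrightarrow> e \<subseteq> V"
  by (metis simple_graph_edgeE empty_subsetI insert_subset)

lemma finite_edge:
  "simple_graph V E \<Longrightarrow> e \<in> edges V E \<Longrightarrow> finite e"
  by (metis simple_graph_edgeE finite.emptyI finite_insert)

lemma finite_edges:
  assumes "simple_graph V E"
  shows "finite (edges V E)"
proof -
  have "edges V E \<subseteq> (\<lambda>(x, y). {x, y}) ` (V \<times> V)"
    unfolding edges_def by auto
  with assms show ?thesis
    unfolding simple_graph_def by (meson finite_SigmaI finite_imageI finite_subset)
qed

text \<open>The coefficient factors because the squares \<open>x\<^sup>2, y\<^sup>2\<close> contribute to \<open>[x,y]\<close> as well.\<close>
lemma ng_mult_edge_coeff: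
  fixes a b :: "('v, 'a::field) ngelem"
  assumes G: "simple_graph V E" and e: "e \<in> edges V E"
  shows "snd (ng_mult V E a b) e = sum (fst a) e * sum (fst b) e"
proof -
  have "finite V" using G unfolding simple_graph_def by blast
  have eV: "e \<subseteq> V" using simple_graph_edge_subset[OF G e] .
  obtain x y where "e = {x, y}" "x \<noteq> y" "E x y" "E y x"
    using simple_graph_edgeE[OF G e] by blast
  with e have vp: "vert_prod V E p q e = (if p \<in> e \<and> q \<in> e then 1 else 0)" for p q
    by (auto simp: vert_prod_def)
  have restrict: "(\<Sum>x\<in>V. if x \<in> e then f x else 0) = sum f e" for f :: "'v \<Rightarrow> 'a"
    using sum.inter_restrict[OF \<open>finite V\<close>, of f e] by (simp add: Int_absorb1[OF eV])
  have "snd (ng_mult V E a b) e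
      = (\<Sum>x\<in>V. \<Sum>y\<in>V. (if x \<in> e then fst a x else 0) * (if y \<in> e then fst b y else 0))"
    unfolding ng_mult_def snd_conv by (intro sum.cong refl) (simp add: vp)
  also have "\<dots> = sum (fst a) e * sum (fst b) e"
    by (simp add: sum_product[symmetric] restrict)
  finally show ?thesis .
qed

lemma ng_mult_nonedge_coeff: "e \<notin> edges V E \<Longrightarrow> snd (ng_mult V E a b) e = 0"
  unfolding ng_mult_def vert_prod_def edges_def by (auto intro!: sum.neutral)

lemma fst_ng_mult [simp]: "fst (ng_mult V E a b) = (\<lambda>_. 0)"
  unfolding ng_mult_def by simp

lemma ng_mult_in_Z_part: "ng_mult V E a b \<in> Z_part V E"
  unfolding Z_part_def NG_carrier_def
  by (simp add: mem_Times_iff ng_mult_nonedge_coeff)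

definition balanced :: "'v set set \<Rightarrow> ('v set \<Rightarrow> 'a::comm_monoid_add) \<Rightarrow> bool" where
  "balanced H \<beta> \<longleftrightarrow> (\<forall>v. (\<Sum>e\<in>{e \<in> H. v \<in> e}. \<beta> e) = 0)"

lemma coherent_iff_balanced:
  "coherent TYPE('a::field) S \<longleftrightarrow> (\<exists>\<beta> :: 'v set \<Rightarrow> 'a. (\<exists>e\<in>S. \<beta> e \<noteq> 0) \<and> balanced S \<beta>)"
  unfolding coherent_def balanced_def ..

lemma balanced_diff:
  fixes \<beta> \<gamma> :: "'v set \<Rightarrow> 'a::ab_group_add"
  shows "balanced H \<beta> \<Longrightarrow> balanced H \<gamma> \<Longrightarrow> balanced H (\<lambda>e. \<beta> e - \<gamma> e)"
  unfolding balanced_def by (simp add: sum_subtractf)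

lemma balanced_cmult:
  fixes \<beta> :: "'v set \<Rightarrow> 'a::comm_ring"
  shows "balanced H \<beta> \<Longrightarrow> balanced H (\<lambda>e. c * \<beta> e)"
  unfolding balanced_def by (simp add: sum_distrib_left[symmetric])

lemma balanced_remove:
  assumes "finite H" "balanced H \<beta>" "\<beta> d = 0"
  shows "balanced (H - {d}) \<beta>"
  unfolding balanced_def
proof
  fix v
  have "(\<Sum>e\<in>{e \<in> H - {d}. v \<in> e}. \<beta> e) = (\<Sum>e\<in>{e \<in> H. v \<in> e}. \<beta> e)"
    by (rule sum.mono_neutral_left) (use assms in auto)
  with assms(2) show "(\<Sum>e\<in>{e \<in> H - {d}. v \<in> e}. \<beta> e) = 0"
    unfolding balanced_def by simp
qed

lemma balanced_sum_edge_sums: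
  fixes \<beta> :: "'v set \<Rightarrow> 'a::comm_ring"
  assumes "finite H" "\<forall>e\<in>H. finite e" "balanced H \<beta>"
  shows "(\<Sum>e\<in>H. \<beta> e * sum u e) = 0"
proof -
  have fin: "finite (\<Union>H)" using assms(1,2) by blast
  have "(\<Sum>e\<in>H. \<beta> e * sum u e) = (\<Sum>e\<in>H. \<Sum>x\<in>{x \<in> \<Union>H. x \<in> e}. \<beta> e * u x)"
    by (intro sum.cong refl) (auto simp: sum_distrib_left intro!: sum.cong)
  also have "\<dots> = (\<Sum>x\<in>\<Union>H. \<Sum>e\<in>{e \<in> H. x \<in> e}. \<beta> e * u x)"
    using sum.swap_restrict[OF assms(1) fin] by simp
  also have "\<dots> = (\<Sum>x\<in>\<Union>H. (\<Sum>e\<in>{e \<in> H. x \<in> e}. \<beta> e) * u x)"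
    by (simp add: sum_distrib_right)
  also have "\<dots> = 0"
    using assms(3) unfolding balanced_def by simp
  finally show ?thesis .
qed

lemma minimally_coherent_balanced_nonzero:
  fixes \<beta> :: "'v set \<Rightarrow> 'a::field"
  assumes "finite H" "minimally_coherent TYPE('a) H" "balanced H \<beta>"
    and "e \<in> H" "\<beta> e \<noteq> 0" "f \<in> H"
  shows "\<beta> f \<noteq> 0"
proof
  assume "\<beta> f = 0"
  with assms(4,5) have "coherent TYPE('a) (H - {f})"
    unfolding coherent_iff_balanced using balanced_remove[OF assms(1,3)] by blast
  moreover have "H - {f} \<subset> H" using assms(6) by blast
  ultimately show False
    using assms(2) unfolding minimally_coherent_def by blast
qed

lemma minimally_coherent_balanced_proportional:
  fixes \<beta> \<gamma> :: "'v set \<Rightarrow> 'a::field"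
  assumes "finite H" "minimally_coherent TYPE('a) H" "balanced H \<beta>" "balanced H \<gamma>"
    and "e \<in> H" "f \<in> H"
  shows "\<beta> e * \<gamma> f = \<gamma> e * \<beta> f"
proof -
  define \<delta> where "\<delta> d = \<beta> e * \<gamma> d - \<gamma> e * \<beta> d" for d
  have "balanced H \<delta>"
    unfolding \<delta>_def using assms(3,4) by (intro balanced_diff balanced_cmult)
  moreover have "\<delta> e = 0" unfolding \<delta>_def by simp
  ultimately have "\<delta> f = 0"
    using minimally_coherent_balanced_nonzero[OF assms(1,2) _ assms(6) _ assms(5)] by blast
  then show ?thesis unfolding \<delta>_def by simp
qed

lemma minimally_coherent_factor_const:
  fixes s :: "'v set \<Rightarrow> 'a::field"
  assumes fin: "finite H" and mc: "minimally_coherent TYPE('a) H"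
    and factor: "\<And>\<beta>. balanced H \<beta> \<Longrightarrow> balanced H (\<lambda>e. \<beta> e * s e)"
    and "e \<in> H" "f \<in> H"
  shows "s e = s f"
proof -
  obtain \<beta> :: "'v set \<Rightarrow> 'a" and d where "d \<in> H" "\<beta> d \<noteq> 0" and bal: "balanced H \<beta>"
    using mc unfolding minimally_coherent_def coherent_iff_balanced by blast
  then have nz: "\<beta> e \<noteq> 0" "\<beta> f \<noteq> 0"
    using minimally_coherent_balanced_nonzero[OF fin mc bal] \<open>e \<in> H\<close> \<open>f \<in> H\<close> by blast+
  have "\<beta> e * (\<beta> f * s f) = (\<beta> e * s e) * \<beta> f"
    using minimally_coherent_balanced_proportional[OF fin mc bal factor[OF bal]] assms(4,5) .
  with nz show ?thesis by (simp add: algebra_simps)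
qed

lemma overlapping_chain_const:
  assumes "Gs \<noteq> []" "\<forall>H\<in>set Gs. \<forall>x\<in>H. \<forall>y\<in>H. s x = s y"
    and "\<forall>i. Suc i < length Gs \<longrightarrow> Gs ! i \<inter> Gs ! Suc i \<noteq> {}"
    and "e \<in> hd Gs" "f \<in> last Gs"
  shows "s e = s f"
  using assms
proof (induction Gs arbitrary: e)
  case Nil
  then show ?case by simp
next
  case (Cons H Hs)
  have const_H: "s x = s y" if "x \<in> H" "y \<in> H" for x y
    using Cons.prems(2) that by (meson list.set_intros(1))
  have "e \<in> H" using Cons.prems(4) by simp
  show ?case
  proof (cases "Hs = []")
    case True
    with Cons.prems(5) have "f \<in> H" by simp
    with \<open>e \<in> H\<close> show ?thesis by (rule const_H)
  next
    case False
    have "H \<inter> hd Hs \<noteq> {}"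
      using Cons.prems(3)[rule_format, of 0] False by (simp add: hd_conv_nth)
    then obtain d where "d \<in> H" "d \<in> hd Hs" by blast
    have "s d = s f"
    proof (rule Cons.IH[OF False])
      show "\<forall>H\<in>set Hs. \<forall>x\<in>H. \<forall>y\<in>H. s x = s y"
        using Cons.prems(2) by (meson list.set_intros(2))
      show "\<forall>i. Suc i < length Hs \<longrightarrow> Hs ! i \<inter> Hs ! Suc i \<noteq> {}"
        using Cons.prems(3) by fastforce
      show "d \<in> hd Hs" by fact
      show "f \<in> last Hs" using Cons.prems(5) False by simp
    qed
    with const_H[OF \<open>e \<in> H\<close> \<open>d \<in> H\<close>] show ?thesis by simp
  qed
qed

lemma MC_edge_connected_const:
  fixes V :: "'v set" and s :: "'v set \<Rightarrow> 'b"
  assumes "MC_edge_connected TYPE('a::field) V E"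
    and "\<And>H. H \<subseteq> edges V E \<Longrightarrow> minimally_coherent TYPE('a) H \<Longrightarrow> \<forall>x\<in>H. \<forall>y\<in>H. s x = s y"
    and "e \<in> edges V E" "f \<in> edges V E"
  shows "s e = s f"
proof -
  obtain Gs :: "'v set set list" where Gs: "Gs \<noteq> []"
    and members: "\<forall>H\<in>set Gs. H \<subseteq> edges V E \<and> minimally_coherent TYPE('a) H"
    and ends: "e \<in> hd Gs" "f \<in> last Gs"
    and overlap: "\<forall>i. Suc i < length Gs \<longrightarrow> Gs ! i \<inter> Gs ! Suc i \<noteq> {}"
    using assms(1,3,4) unfolding MC_edge_connected_def by blast
  have "\<forall>H\<in>set Gs. \<forall>x\<in>H. \<forall>y\<in>H. s x = s y"
    using members assms(2) by blast
  from overlapping_chain_const[OF Gs this overlap ends] show ?thesis .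
qed

definition vertex_vec :: "'v \<Rightarrow> ('v, 'a::field) ngelem" where
  "vertex_vec x = ((\<lambda>y. if y = x then 1 else 0), (\<lambda>_. 0))"

lemma vertex_vec_in_U_part: "x \<in> V \<Longrightarrow> vertex_vec x \<in> U_part V E"
  unfolding vertex_vec_def U_part_def NG_carrier_def by auto

lemma sum_vertex_vec:
  "finite e \<Longrightarrow> sum (fst (vertex_vec x)) e = (if x \<in> e then 1 else 0)"
  unfolding vertex_vec_def by simp

lemma edge_vec_in_carrier: "e \<in> edges V E \<Longrightarrow> edge_vec e \<in> NG_carrier V E"
  unfolding edge_vec_def NG_carrier_def by auto

lemma ng_zero_in_carrier: "ng_zero \<in> NG_carrier V E"
  unfolding ng_zero_def NG_carrier_def by simp

lemma U_part_subset_carrier: "U_part V E \<subseteq> NG_carrier V E"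
  unfolding U_part_def by blast

lemma in_ann_if_edge_sums_zero:
  assumes "simple_graph V E" "u \<in> U_part V E" "\<forall>e\<in>edges V E. sum (fst u) e = 0"
  shows "u \<in> ann V E"
proof -
  have "ng_mult V E u v = ng_zero" for v
  proof -
    have "snd (ng_mult V E u v) e = 0" for e
      using assms
      by (cases "e \<in> edges V E") (simp_all add: ng_mult_edge_coeff ng_mult_nonedge_coeff)
    then show ?thesis unfolding ng_zero_def by (simp add: prod_eq_iff fun_eq_iff)
  qed
  with assms(2) show ?thesis unfolding ann_def by blast
qed

lemma U_part_eq_smul_if_edge_sums:
  fixes c :: "'a::field"
  assumes G: "simple_graph V E" and ann: "ann V E = {ng_zero :: ('v, 'a) ngelem}"
    and u: "u \<in> U_part V E" and w: "w \<in> U_part V E"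
    and sums: "\<forall>e\<in>edges V E. sum (fst w) e = c * sum (fst u) e"
  shows "w = ng_smul c u"
proof -
  define d :: "('v, 'a) ngelem" where "d = ((\<lambda>x. fst w x - c * fst u x), (\<lambda>_. 0))"
  have "d \<in> U_part V E"
    using u w unfolding d_def U_part_def NG_carrier_def by auto
  moreover have "\<forall>e\<in>edges V E. sum (fst d) e = 0"
    using sums unfolding d_def by (simp add: sum_subtractf sum_distrib_left)
  ultimately have "d \<in> ann V E" by (rule in_ann_if_edge_sums_zero[OF G])
  with ann have "d = ng_zero" by blast
  then show ?thesis
    using u w unfolding d_def ng_zero_def ng_smul_def U_part_def
    by (auto simp: prod_eq_iff fun_eq_iff)
qed

definition edge_factor :: "(('v, 'a::field) ngelem \<Rightarrow> ('v, 'a) ngelem) \<Rightarrow> 'v set \<Rightarrow> 'a" where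
  "edge_factor g e = (SOME c. g (edge_vec e) = ng_smul c (edge_vec e))"

locale edge_scaling_automorphism =
  fixes V :: "'v set" and E :: "'v \<Rightarrow> 'v \<Rightarrow> bool"
    and g :: "('v, 'a::field) ngelem \<Rightarrow> ('v, 'a) ngelem"
  assumes graph: "simple_graph V E"
    and automorphism: "ng_automorphism V E g"
    and scaling: "edge_scaling V E g"
begin

lemma map_add:
  "a \<in> NG_carrier V E \<Longrightarrow> b \<in> NG_carrier V E \<Longrightarrow> g (ng_add a b) = ng_add (g a) (g b)"
  using automorphism unfolding ng_automorphism_def by (elim conjE) simp

lemma map_smul: "a \<in> NG_carrier V E \<Longrightarrow> g (ng_smul c a) = ng_smul c (g a)"
  using automorphism unfolding ng_automorphism_def by (elim conjE) simp

lemma map_mult: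
  "a \<in> NG_carrier V E \<Longrightarrow> b \<in> NG_carrier V E \<Longrightarrow> g (ng_mult V E a b) = ng_mult V E (g a) (g b)"
  using automorphism unfolding ng_automorphism_def by (elim conjE) simp

lemma inj_on_carrier: "inj_on g (NG_carrier V E)"
  using automorphism unfolding ng_automorphism_def by (elim conjE) (rule bij_betw_imp_inj_on)

lemma map_U_part: "a \<in> U_part V E \<Longrightarrow> g a \<in> U_part V E"
  using automorphism unfolding ng_automorphism_def by (elim conjE) blast

lemma map_zero: "g ng_zero = ng_zero"
proof -
  have "g ng_zero = g (ng_smul 0 ng_zero)"
    by (simp add: ng_smul_def ng_zero_def)
  also have "\<dots> = ng_smul 0 (g ng_zero)"
    by (rule map_smul[OF ng_zero_in_carrier])
  also have "\<dots> = ng_zero"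
    by (simp add: ng_smul_def ng_zero_def)
  finally show ?thesis .
qed

lemma edge_factor:
  assumes "e \<in> edges V E"
  shows "g (edge_vec e) = ng_smul (edge_factor g e) (edge_vec e)"
proof -
  have "\<exists>c. g (edge_vec e) = ng_smul c (edge_vec e)"
    using scaling assms unfolding edge_scaling_def by blast
  then show ?thesis unfolding edge_factor_def by (rule someI_ex)
qed

lemma edge_factor_nonzero:
  assumes e: "e \<in> edges V E"
  shows "edge_factor g e \<noteq> 0"
proof
  assume "edge_factor g e = 0"
  then have "g (edge_vec e) = ng_zero"
    using edge_factor[OF e] by (simp add: ng_smul_def ng_zero_def)
  then have "g (edge_vec e) = g ng_zero"
    by (simp only: map_zero)
  then have "edge_vec e = (ng_zero :: ('v, 'a) ngelem)"
    by (rule inj_onD[OF inj_on_carrier _ edge_vec_in_carrier[OF e] ng_zero_in_carrier])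
  then have "snd (edge_vec e :: ('v, 'a) ngelem) e = snd (ng_zero :: ('v, 'a) ngelem) e"
    by (rule arg_cong)
  then show False
    unfolding edge_vec_def ng_zero_def by simp
qed

lemma map_Z_part_supported:
  assumes "finite F" "F \<subseteq> edges V E"
  shows "g ((\<lambda>_. 0), (\<lambda>f. if f \<in> F then z f else 0))
       = ((\<lambda>_. 0), (\<lambda>f. if f \<in> F then edge_factor g f * z f else 0))"
  using assms
proof (induction F)
  case empty
  then show ?case using map_zero by (simp add: ng_zero_def)
next
  case (insert e F)
  let ?a = "((\<lambda>_. 0), (\<lambda>f. if f \<in> F then z f else 0)) :: ('v, 'a) ngelem"
  have e: "e \<in> edges V E" and F: "F \<subseteq> edges V E" using insert.prems by auto
  have a: "?a \<in> NG_carrier V E" using F unfolding NG_carrier_def by auto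
  have b: "ng_smul (z e) (edge_vec e) \<in> NG_carrier V E"
    using e unfolding ng_smul_def edge_vec_def NG_carrier_def by auto
  have "((\<lambda>_. 0), (\<lambda>f. if f \<in> insert e F then z f else 0))
      = ng_add ?a (ng_smul (z e) (edge_vec e))"
    using insert.hyps(2) unfolding ng_add_def ng_smul_def edge_vec_def by (auto simp: fun_eq_iff)
  then have "g ((\<lambda>_. 0), (\<lambda>f. if f \<in> insert e F then z f else 0))
      = ng_add (g ?a) (ng_smul (z e) (ng_smul (edge_factor g e) (edge_vec e)))"
    by (simp add: map_add[OF a b] map_smul[OF edge_vec_in_carrier[OF e]] edge_factor[OF e])
  also have "\<dots> = ((\<lambda>_. 0), (\<lambda>f. if f \<in> insert e F then edge_factor g f * z f else 0))"
    using insert.hyps(2) unfolding insert.IH[OF F] ng_add_def ng_smul_def edge_vec_def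
    by (auto simp: fun_eq_iff)
  finally show ?case .
qed

lemma map_Z_part:
  assumes "a \<in> Z_part V E"
  shows "g a = ((\<lambda>_. 0), (\<lambda>f. edge_factor g f * snd a f))"
proof -
  have "a = ((\<lambda>_. 0), (\<lambda>f. if f \<in> edges V E then snd a f else 0))"
    using assms unfolding Z_part_def NG_carrier_def by (auto simp: prod_eq_iff fun_eq_iff)
  then have "g a = ((\<lambda>_. 0), (\<lambda>f. if f \<in> edges V E then edge_factor g f * snd a f else 0))"
    using map_Z_part_supported[OF finite_edges[OF graph] order.refl] by metis
  also have "\<dots> = ((\<lambda>_. 0), (\<lambda>f. edge_factor g f * snd a f))"
    using assms unfolding Z_part_def NG_carrier_def by (auto simp: fun_eq_iff)
  finally show ?thesis .
qed

lemma edge_sums_mult: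
  assumes "u \<in> U_part V E" "v \<in> U_part V E" "e \<in> edges V E"
  shows "edge_factor g e * (sum (fst u) e * sum (fst v) e)
    = sum (fst (g u)) e * sum (fst (g v)) e"
proof -
  have "edge_factor g e * (sum (fst u) e * sum (fst v) e) = snd (g (ng_mult V E u v)) e"
    by (simp add: map_Z_part[OF ng_mult_in_Z_part] ng_mult_edge_coeff[OF graph assms(3)])
  also have "\<dots> = snd (ng_mult V E (g u) (g v)) e"
    using assms(1,2) U_part_subset_carrier by (metis map_mult subsetD)
  also have "\<dots> = sum (fst (g u)) e * sum (fst (g v)) e"
    by (rule ng_mult_edge_coeff[OF graph assms(3)])
  finally show ?thesis .
qed

text \<open>The witness is \<open>s = \<Sum>y\<in>e. (g x)\<^sub>y\<close> for a vertex \<open>x\<close> of \<open>e\<close>: evaluating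
  \<open>edge_sums_mult\<close> at \<open>u = v = x\<close> gives \<open>edge_factor g e = s\<^sup>2\<close>, and at \<open>v = x\<close> the rest.\<close>
lemma edge_sums_scaled:
  assumes e: "e \<in> edges V E"
  shows "\<exists>s. s \<noteq> 0 \<and> edge_factor g e = s\<^sup>2 \<and>
    (\<forall>u\<in>U_part V E. sum (fst (g u)) e = s * sum (fst u) e)"
proof -
  obtain x where "x \<in> e" using simple_graph_edgeE[OF graph e] by blast
  have "finite e" using finite_edge[OF graph e] .
  have x: "vertex_vec x \<in> U_part V E"
    using \<open>x \<in> e\<close> simple_graph_edge_subset[OF graph e] by (blast intro: vertex_vec_in_U_part)
  have one: "sum (fst (vertex_vec x :: ('v, 'a) ngelem)) e = 1"
    using \<open>x \<in> e\<close> by (simp add: sum_vertex_vec[OF \<open>finite e\<close>])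
  define s where "s = sum (fst (g (vertex_vec x))) e"
  have sq: "edge_factor g e = s\<^sup>2"
    using edge_sums_mult[OF x x e] by (simp add: one s_def power2_eq_square)
  then have "s \<noteq> 0" using edge_factor_nonzero[OF e] by auto
  have "sum (fst (g u)) e = s * sum (fst u) e" if u: "u \<in> U_part V E" for u
  proof -
    have "s * (s * sum (fst u) e) = s * sum (fst (g u)) e"
      using edge_sums_mult[OF u x e] by (simp add: one sq s_def power2_eq_square algebra_simps)
    with \<open>s \<noteq> 0\<close> show ?thesis by simp
  qed
  with \<open>s \<noteq> 0\<close> sq show ?thesis by blast
qed

text \<open>At a vertex \<open>v\<close>, apply \<open>balanced_sum_edge_sums\<close> to \<open>g\<close> of the basis vector \<open>v\<close>,
  whose edge sums are \<open>s e\<close> on edges through \<open>v\<close> and \<open>0\<close> elsewhere.\<close>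
lemma balanced_mult_edge_scale:
  assumes s: "\<forall>e\<in>edges V E. \<forall>u\<in>U_part V E. sum (fst (g u)) e = s e * sum (fst u) e"
    and H: "H \<subseteq> edges V E" and bal: "balanced H \<beta>"
  shows "balanced H (\<lambda>e. \<beta> e * s e)"
  unfolding balanced_def
proof
  fix v
  have finH: "finite H" using H finite_edges[OF graph] by (rule finite_subset)
  have fin: "\<forall>e\<in>H. finite e" using H finite_edge[OF graph] by blast
  show "(\<Sum>e\<in>{e \<in> H. v \<in> e}. \<beta> e * s e) = 0"
  proof (cases "v \<in> V")
    case False
    then have "{e \<in> H. v \<in> e} = {}"
      using H simple_graph_edge_subset[OF graph] by blast
    then show ?thesis by (metis sum.empty)
  next
    case True
    have gv: "sum (fst (g (vertex_vec v))) e = (if v \<in> e then s e else 0)" if "e \<in> H" for e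
    proof -
      have "e \<in> edges V E" using that H by blast
      then have "sum (fst (g (vertex_vec v))) e
          = s e * sum (fst (vertex_vec v :: ('v, 'a) ngelem)) e"
        using s vertex_vec_in_U_part[OF True] by blast
      with that fin show ?thesis by (simp add: sum_vertex_vec)
    qed
    have "(\<Sum>e\<in>{e \<in> H. v \<in> e}. \<beta> e * s e)
        = (\<Sum>e\<in>H. \<beta> e * (if v \<in> e then s e else 0))"
      by (simp add: sum.inter_filter[OF finH] if_distrib cong: if_cong)
    also have "\<dots> = (\<Sum>e\<in>H. \<beta> e * sum (fst (g (vertex_vec v))) e)"
      by (simp add: gv)
    also have "\<dots> = 0" by (rule balanced_sum_edge_sums[OF finH fin bal])
    finally show ?thesis .
  qed
qed

lemma map_Z_part_const_factor:
  assumes "\<forall>e\<in>edges V E. edge_factor g e = c" "a \<in> Z_part V E"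
  shows "g a = ng_smul c a"
proof -
  have "edge_factor g f * snd a f = c * snd a f" for f
    using assms unfolding Z_part_def NG_carrier_def by (cases "f \<in> edges V E") auto
  then show ?thesis
    using assms(2) unfolding map_Z_part[OF assms(2)] ng_smul_def Z_part_def
    by (auto simp: prod_eq_iff fun_eq_iff)
qed

end

theorem proposition9p2:
  fixes V :: "'v set" and E :: "'v \<Rightarrow> 'v \<Rightarrow> bool"
    and g :: "('v, 'a::field) ngelem \<Rightarrow> ('v, 'a) ngelem"
  assumes "simple_graph V E"
    and "(2::'a) \<noteq> 0"
    and "MC_edge_connected TYPE('a) V E"
    and "ann V E = {ng_zero :: ('v, 'a) ngelem}"
    and "ng_automorphism V E g"
    and "edge_scaling V E g"
  shows "scalar_aut V E g"
proof -
  interpret edge_scaling_automorphism V E g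
    using assms(1,5,6) by unfold_locales
  obtain s where s: "\<forall>e\<in>edges V E. s e \<noteq> 0 \<and> edge_factor g e = (s e)\<^sup>2 \<and>
      (\<forall>u\<in>U_part V E. sum (fst (g u)) e = s e * sum (fst u) e)"
    using ballI[OF edge_sums_scaled] by (rule bchoice[THEN exE])
  then have s_scale: "\<forall>e\<in>edges V E. \<forall>u\<in>U_part V E. sum (fst (g u)) e = s e * sum (fst u) e"
    by blast
  have s_const: "s e = s f" if "e \<in> edges V E" "f \<in> edges V E" for e f
  proof (rule MC_edge_connected_const[OF assms(3) _ that])
    fix H assume H: "H \<subseteq> edges V E" "minimally_coherent TYPE('a) H"
    have "finite H" using H(1) finite_edges[OF graph] by (rule finite_subset)
    show "\<forall>x\<in>H. \<forall>y\<in>H. s x = s y"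
      by (intro ballI minimally_coherent_factor_const[OF \<open>finite H\<close> H(2)]
          balanced_mult_edge_scale[OF s_scale H(1)])
  qed
  obtain \<alpha> where "\<alpha> \<noteq> 0" and \<alpha>: "\<forall>e\<in>edges V E. s e = \<alpha>"
  proof (cases "edges V E = {}")
    case True
    then show ?thesis using that[of 1] by simp
  next
    case False
    then obtain e where e: "e \<in> edges V E" by blast
    show ?thesis
    proof (rule that)
      show "s e \<noteq> 0" using s e by blast
      show "\<forall>f\<in>edges V E. s f = s e" using s_const e by blast
    qed
  qed
  have factor: "\<forall>e\<in>edges V E. edge_factor g e = \<alpha>\<^sup>2"
    using s \<alpha> by simp
  have "g u = ng_smul \<alpha> u" if "u \<in> U_part V E" for u
    using U_part_eq_smul_if_edge_sums[OF assms(1,4) that map_U_part[OF that]] s_scale \<alpha> that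
    by simp
  moreover have "g a = ng_smul (\<alpha>\<^sup>2) a" if "a \<in> Z_part V E" for a
    by (rule map_Z_part_const_factor[OF factor that])
  ultimately show ?thesis
    unfolding scalar_aut_def using \<open>\<alpha> \<noteq> 0\<close> by blast
qed

end
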